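(* For every nonzero function $f:\mathbb{F}_2^n\to\mathbb{C}$ and every Lagrangian subspace $L\le\mathbb{F}_2^{2n}$, $$P_f(L)\le\max_{\phi:\ \mathcal{L}(\phi)=L}\Big(\frac{|\langle f,\phi\rangle|}{\|f\|_2}\Big)^2,$$ the maximum being over stabilizer states $\phi$ with $\mathcal{L}(\phi)=L$.
   Context: $\langle f,g\rangle=\mathbb{E}_xf(x)\overline{g(x)}$, $\|f\|_2=\langle f,f\rangle^{1/2}$, $\Delta_af(x)=f(x+a)\overline{f(x)}$, $\hat g(b)=\mathbb{E}_xg(x)(-1)^{b\cdot x}$, $\|f\|_{U^3}=(\mathbb{E}_{x,a,b,c}\Delta_a\Delta_b\Delta_cf(x))^{1/8}$. A Lagrangian subspace of $\mathbb{F}_2^{2n}$ is a maximal isotropic subspace for $[(a,b),(c,d)]=a\cdot d+b\cdot c$. A stabilizer state is $\phi$ with $\|\phi\|_2=\|\phi\|_{U^3}=1$; $\mathcal{L}(\phi)$ is the unique Lagrangian with $|\widehat{\Delta_a\phi}(b)|=\mathbf{1}_{\mathcal{L}(\phi)}(a,b)$. $P_f(a,b)=|\widehat{\Delta_af}(b)|^2/(2^n\|f\|_2^4)$ and $P_f(L)=\sum_{(a,b)\in L}P_f(a,b)$. *)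

theory Defs
  imports "HOL-Analysis.Analysis"
begin

text \<open>Vectors of F_2^n are modelled as functions 'n => bool on a finite index
type 'n with CARD('n) = n; True = 1, False = 0.\<close>

type_synonym 'n f2vec = "'n \<Rightarrow> bool"

definition vadd :: "'n f2vec \<Rightarrow> 'n f2vec \<Rightarrow> 'n f2vec" where
  "vadd x y = (\<lambda>i. x i \<noteq> y i)"

definition vzero :: "'n f2vec" where
  "vzero = (\<lambda>i. False)"

definition vdot :: "('n::finite) f2vec \<Rightarrow> 'n f2vec \<Rightarrow> bool" where
  "vdot x y = odd (card {i. x i \<and> y i})"

definition chr :: "('n::finite) f2vec \<Rightarrow> 'n f2vec \<Rightarrow> complex" where
  "chr b x = (if vdot b x then -1 else 1)"

definition Ex :: "(('n::finite) f2vec \<Rightarrow> complex) \<Rightarrow> complex" where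
  "Ex g = (\<Sum>x\<in>UNIV. g x) / of_nat (CARD('n f2vec))"

definition ip :: "(('n::finite) f2vec \<Rightarrow> complex) \<Rightarrow> ('n f2vec \<Rightarrow> complex) \<Rightarrow> complex" where
  "ip f g = Ex (\<lambda>x. f x * cnj (g x))"

definition norm2 :: "(('n::finite) f2vec \<Rightarrow> complex) \<Rightarrow> real" where
  "norm2 f = sqrt (Re (ip f f))"

definition Delta :: "'n f2vec \<Rightarrow> ('n f2vec \<Rightarrow> complex) \<Rightarrow> 'n f2vec \<Rightarrow> complex" where
  "Delta a f x = f (vadd x a) * cnj (f x)"

definition fhat :: "(('n::finite) f2vec \<Rightarrow> complex) \<Rightarrow> 'n f2vec \<Rightarrow> complex" where
  "fhat g b = Ex (\<lambda>x. g x * chr b x)"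

text \<open>Gowers U^3 norm: (E_{x,a,b,c} Delta_a Delta_b Delta_c f(x))^(1/8); the
average is a nonnegative real, so we take its real part.\<close>
definition U3 :: "(('n::finite) f2vec \<Rightarrow> complex) \<Rightarrow> real" where
  "U3 f = (Re (Ex (\<lambda>x. Ex (\<lambda>a. Ex (\<lambda>b. Ex (\<lambda>c.
              Delta a (Delta b (Delta c f)) x)))))) powr (1/8)"

definition stabilizer_state :: "(('n::finite) f2vec \<Rightarrow> complex) \<Rightarrow> bool" where
  "stabilizer_state \<phi> \<longleftrightarrow> norm2 \<phi> = 1 \<and> U3 \<phi> = 1"

definition sympl :: "('n::finite) f2vec \<times> 'n f2vec \<Rightarrow> 'n f2vec \<times> 'n f2vec \<Rightarrow> bool" where
  "sympl u v = (vdot (fst u) (snd v) \<noteq> vdot (snd u) (fst v))"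

definition f2_subspace :: "('n f2vec \<times> 'n f2vec) set \<Rightarrow> bool" where
  "f2_subspace L \<longleftrightarrow> (vzero, vzero) \<in> L \<and>
     (\<forall>u\<in>L. \<forall>v\<in>L. (vadd (fst u) (fst v), vadd (snd u) (snd v)) \<in> L)"

definition isotropic :: "(('n::finite) f2vec \<times> 'n f2vec) set \<Rightarrow> bool" where
  "isotropic L \<longleftrightarrow> f2_subspace L \<and> (\<forall>u\<in>L. \<forall>v\<in>L. \<not> sympl u v)"

definition lagrangian :: "(('n::finite) f2vec \<times> 'n f2vec) set \<Rightarrow> bool" where
  "lagrangian L \<longleftrightarrow> isotropic L \<and> (\<forall>M. isotropic M \<and> L \<subseteq> M \<longrightarrow> M = L)"

definition stabLag :: "(('n::finite) f2vec \<Rightarrow> complex) \<Rightarrow> ('n f2vec \<times> 'n f2vec) set" where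
  "stabLag \<phi> = (THE L. lagrangian L \<and>
      (\<forall>a b. cmod (fhat (Delta a \<phi>) b) = (if (a, b) \<in> L then 1 else 0)))"

definition Pf :: "(('n::finite) f2vec \<Rightarrow> complex) \<Rightarrow> 'n f2vec \<Rightarrow> 'n f2vec \<Rightarrow> real" where
  "Pf f a b = (cmod (fhat (Delta a f) b))^2 / (2 ^ CARD('n) * (norm2 f)^4)"

definition PfL :: "(('n::finite) f2vec \<Rightarrow> complex) \<Rightarrow> ('n f2vec \<times> 'n f2vec) set \<Rightarrow> real" where
  "PfL f L = (\<Sum>(a, b)\<in>L. Pf f a b)"

end

theory Submission
  imports Defs
begin

(*
  The Weyl operators W_(a,b) h x = h (x + a) (-1)^(b.x) are unitary, commute up to the sign
  (-1)^[u,v] and satisfy hat(Delta_a h)(b) = <W_(a,b) h, h>. Everything rests on the identity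
    sum_u <W_u h1, h2> conj <W_u g1, g2> = 2^n <h1, g1> <g2, h2>.
  It shows that the Weyl coefficients c(u) = <W_u psi, psi> of a unit vector psi have second
  moment 2^n, while ||psi||_U3^8 is 2^-n times their fourth moment. Hence for a stabilizer state
  |c| is the indicator of a set of size 2^n, which is a Lagrangian L on which psi is a joint
  eigenvector; conversely, the unit joint eigenvectors of a Lagrangian L (which exist) are
  exactly the stabilizer states psi with L(psi) = L.

  Fix one of them, phi0. Any other has the same overlap with f as some translate W_v phi0, so
  the maximum is attained by a translate. As a function of v, |<f, W_v phi0>|^2 is the
  symplectic Fourier transform of a function supported on L, and Parseval gives
    sum_(u in L) |<W_u f, f>|^2 = sum_v |<f, W_v phi0>|^4
                                <= max_v |<f, W_v phi0>|^2 * sum_v |<f, W_v phi0>|^2,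
  where the last sum is 2^n ||f||^2.
*)

section \<open>Vectors and characters over F_2\<close>

lemma vadd_comm: "vadd x y = vadd y x"
  unfolding vadd_def by auto

lemma vadd_assoc: "vadd (vadd x y) z = vadd x (vadd y z)"
  unfolding vadd_def by auto

lemma vadd_left_commute: "vadd x (vadd y z) = vadd y (vadd x z)"
  unfolding vadd_def by auto

lemma vadd_vzero [simp]: "vadd x vzero = x" "vadd vzero x = x"
  unfolding vadd_def vzero_def by auto

lemma vadd_self [simp]: "vadd x x = vzero"
  unfolding vadd_def vzero_def by auto

lemma vadd_vadd_cancel [simp]: "vadd (vadd x a) a = x"
  unfolding vadd_def by auto

lemma vadd_eq_vzero_iff: "vadd x y = vzero \<longleftrightarrow> x = y"
  unfolding vadd_def vzero_def by (auto simp: fun_eq_iff)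

lemma sum_vadd_shift:
  fixes g :: "('n::finite) f2vec \<Rightarrow> 'b::comm_monoid_add"
  shows "(\<Sum>x\<in>UNIV. g (vadd x a)) = (\<Sum>x\<in>UNIV. g x)"
    and "(\<Sum>x\<in>UNIV. g (vadd a x)) = (\<Sum>x\<in>UNIV. g x)"
proof -
  show shift: "(\<Sum>x\<in>UNIV. g (vadd x a)) = (\<Sum>x\<in>UNIV. g x)"
    by (rule sum.reindex_bij_witness[where i="\<lambda>x. vadd x a" and j="\<lambda>x. vadd x a"]) auto
  then show "(\<Sum>x\<in>UNIV. g (vadd a x)) = (\<Sum>x\<in>UNIV. g x)"
    unfolding vadd_comm[of a] .
qed

lemma sum_UNIV_pair: "(\<Sum>u\<in>UNIV. F u) = (\<Sum>a\<in>UNIV. \<Sum>b\<in>UNIV. F (a, b))"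
  for F :: "'a::finite \<times> 'b::finite \<Rightarrow> 'c::comm_monoid_add"
  by (subst UNIV_Times_UNIV[symmetric], subst sum.cartesian_product) simp

lemma vdot_comm: "vdot x y = vdot y x"
  unfolding vdot_def by (simp add: conj_commute)

lemma vdot_vadd_left: "vdot (vadd x y) (z::('n::finite) f2vec) \<longleftrightarrow> vdot x z \<noteq> vdot y z"
proof -
  define X where "X = {i. x i \<and> z i}"
  define Y where "Y = {i. y i \<and> z i}"
  have "{i. vadd x y i \<and> z i} = (X \<union> Y) - (X \<inter> Y)"
    unfolding X_def Y_def vadd_def by auto
  moreover have "card ((X \<union> Y) - (X \<inter> Y)) + 2 * card (X \<inter> Y) = card X + card Y"
  proof -
    have "X \<inter> Y \<subseteq> X \<union> Y"
      by blast
    then show ?thesis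
      using card_Un_Int[of X Y] card_Diff_subset[of "X \<inter> Y"] card_mono[of "X \<union> Y"] by fastforce
  qed
  ultimately show ?thesis
    unfolding vdot_def X_def[symmetric] Y_def[symmetric] by presburger
qed

lemma vdot_vadd_right: "vdot z (vadd x y) \<longleftrightarrow> vdot z x \<noteq> vdot z y"
  using vdot_vadd_left[of x y z] by (simp add: vdot_comm)

lemma vdot_vzero [simp]: "\<not> vdot vzero x" "\<not> vdot x vzero"
  unfolding vdot_def vzero_def by auto

lemma chr_comm: "chr b x = chr x b"
  unfolding chr_def by (simp add: vdot_comm)

lemma chr_vadd_left: "chr (vadd b c) x = chr b x * chr c x"
  unfolding chr_def by (auto simp: vdot_vadd_left)

lemma chr_vadd_right: "chr b (vadd x y) = chr b x * chr b y"
  unfolding chr_def by (auto simp: vdot_vadd_right)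

lemma chr_vzero [simp]: "chr vzero x = 1" "chr x vzero = 1"
  unfolding chr_def by auto

lemma chr_mult_self [simp]: "chr b x * chr b x = 1" "chr b x * (chr b x * z) = z"
  unfolding chr_def by auto

lemma cnj_chr [simp]: "cnj (chr b x) = chr b x"
  unfolding chr_def by auto

lemma sum_chr:
  "(\<Sum>b\<in>UNIV. chr b (z::('n::finite) f2vec)) = (if z = vzero then of_nat CARD('n f2vec) else 0)"
proof (cases "z = vzero")
  case False
  then obtain i where "z i"
    unfolding vzero_def by auto
  define e :: "'n f2vec" where "e = (\<lambda>j. j = i)"
  have "{j. e j \<and> z j} = {i}"
    unfolding e_def using \<open>z i\<close> by auto
  then have "chr e z = -1"
    unfolding chr_def vdot_def by simp
  have "(\<Sum>b\<in>UNIV. chr b z) = (\<Sum>b\<in>UNIV. chr (vadd b e) z)"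
    by (rule sum_vadd_shift[symmetric])
  also have "\<dots> = - (\<Sum>b\<in>UNIV. chr b z)"
    by (simp add: chr_vadd_left \<open>chr e z = -1\<close> sum_negf)
  finally show ?thesis
    using False by simp
qed simp

lemma sum_chr_right:
  "(\<Sum>x\<in>UNIV. chr b (x::('n::finite) f2vec)) = (if b = vzero then of_nat CARD('n f2vec) else 0)"
  by (simp only: chr_comm[of b] sum_chr)

lemma sum_chr_mult_chr:
  "(\<Sum>b\<in>UNIV. chr b x * chr b (y::('n::finite) f2vec)) = (if x = y then of_nat CARD('n f2vec) else 0)"
  by (simp only: chr_vadd_right[symmetric] sum_chr vadd_eq_vzero_iff)

lemma parseval:
  fixes F G :: "('n::finite) f2vec \<Rightarrow> complex"
  shows "(\<Sum>b\<in>UNIV. (\<Sum>x\<in>UNIV. F x * chr b x) * cnj (\<Sum>y\<in>UNIV. G y * chr b y))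
         = of_nat CARD('n f2vec) * (\<Sum>x\<in>UNIV. F x * cnj (G x))"
proof -
  have "(\<Sum>b\<in>UNIV. (\<Sum>x\<in>UNIV. F x * chr b x) * cnj (\<Sum>y\<in>UNIV. G y * chr b y))
      = (\<Sum>b\<in>UNIV. \<Sum>x\<in>UNIV. \<Sum>y\<in>UNIV. F x * cnj (G y) * (chr b x * chr b y))"
    by (simp add: cnj_sum sum_product mult_ac)
  also have "\<dots> = (\<Sum>x\<in>UNIV. \<Sum>y\<in>UNIV. F x * cnj (G y) * (\<Sum>b\<in>UNIV. chr b x * chr b y))"
    by (subst sum.swap, rule sum.cong[OF refl], subst sum.swap) (simp add: sum_distrib_left)
  also have "\<dots> = (\<Sum>x\<in>UNIV. F x * cnj (G x) * of_nat CARD('n f2vec))"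
    by (simp add: sum_chr_mult_chr if_distrib cong: if_cong)
  finally show ?thesis
    by (simp add: sum_distrib_left mult_ac)
qed

section \<open>Inner products and Weyl operators\<close>

lemma ip_eq_sum: "ip g h = (\<Sum>x\<in>UNIV. g x * cnj (h x)) / of_nat CARD(('n::finite) f2vec)"
  for g h :: "('n::finite) f2vec \<Rightarrow> complex"
  unfolding ip_def Ex_def ..

lemma ip_scale_left: "ip (\<lambda>x. k * g x) h = k * ip g h"
  unfolding ip_eq_sum by (simp add: sum_distrib_left mult_ac)

lemma ip_scale_right: "ip g (\<lambda>x. k * h x) = cnj k * ip g h"
  unfolding ip_eq_sum by (simp add: sum_distrib_left mult_ac)

lemma ip_diff_left: "ip (\<lambda>x. g x - h x) f = ip g f - ip h f"
  unfolding ip_eq_sum by (simp add: algebra_simps sum_subtractf diff_divide_distrib)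

lemma ip_diff_right: "ip f (\<lambda>x. g x - h x) = ip f g - ip f h"
  unfolding ip_eq_sum by (simp add: algebra_simps sum_subtractf diff_divide_distrib)

lemma cnj_ip: "cnj (ip g h) = ip h g"
  unfolding ip_eq_sum by (simp add: mult_ac)

lemma ip_mult_ip_swap: "ip f g * ip g f = of_real ((cmod (ip f g))^2)"
  by (simp only: complex_norm_square cnj_ip)

lemma norm2_nonneg: "norm2 g \<ge> 0"
  and norm2_sq: "(norm2 g)^2 = (\<Sum>x\<in>UNIV. (cmod (g x))^2) / real CARD(('n::finite) f2vec)"
  and ip_self: "ip g g = of_real ((norm2 g)^2)"
  for g :: "('n::finite) f2vec \<Rightarrow> complex"
proof -
  have "ip g g = of_real ((\<Sum>x\<in>UNIV. (cmod (g x))^2) / real CARD('n f2vec))"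
    by (simp only: ip_eq_sum of_real_divide of_real_sum complex_norm_square of_real_of_nat_eq)
  moreover have "(\<Sum>x\<in>UNIV. (cmod (g x))^2) / real CARD('n f2vec) \<ge> 0"
    by (simp add: sum_nonneg)
  ultimately show "norm2 g \<ge> 0" "(norm2 g)^2 = (\<Sum>x\<in>UNIV. (cmod (g x))^2) / real CARD('n f2vec)"
    unfolding norm2_def by simp_all
  then show "ip g g = of_real ((norm2 g)^2)"
    using \<open>ip g g = _\<close> by simp
qed

lemma norm2_eq_0_iff: "norm2 g = 0 \<longleftrightarrow> g = (\<lambda>x. 0)"
proof -
  have "norm2 g = 0 \<longleftrightarrow> (norm2 g)^2 = 0"
    by simp
  also have "\<dots> \<longleftrightarrow> (\<Sum>x\<in>UNIV. (cmod (g x))^2) = 0"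
    unfolding norm2_sq by simp
  also have "\<dots> \<longleftrightarrow> g = (\<lambda>x. 0)"
    by (simp add: sum_nonneg_eq_0_iff fun_eq_iff)
  finally show ?thesis .
qed

lemma norm2_eq_1_iff: "norm2 g = 1 \<longleftrightarrow> ip g g = 1"
proof -
  have "ip g g = 1 \<longleftrightarrow> (norm2 g)^2 = 1"
    unfolding ip_self by (simp only: of_real_eq_1_iff)
  then show ?thesis
    using norm2_nonneg[of g] by (auto simp: power2_eq_1_iff)
qed

definition weyl ::
    "('n::finite) f2vec \<times> 'n f2vec \<Rightarrow> ('n f2vec \<Rightarrow> complex) \<Rightarrow> 'n f2vec \<Rightarrow> complex"
  where "weyl u h x = h (vadd x (fst u)) * chr (snd u) x"

definition padd :: "'n f2vec \<times> 'n f2vec \<Rightarrow> 'n f2vec \<times> 'n f2vec \<Rightarrow> 'n f2vec \<times> 'n f2vec"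
  where "padd u v = (vadd (fst u) (fst v), vadd (snd u) (snd v))"

definition sympl_sign :: "('n::finite) f2vec \<times> 'n f2vec \<Rightarrow> 'n f2vec \<times> 'n f2vec \<Rightarrow> complex"
  where "sympl_sign u v = (if sympl u v then -1 else 1)"

lemma fhat_Delta: "fhat (Delta a h) b = ip (weyl (a, b) h) h"
  unfolding fhat_def ip_def weyl_def Delta_def by (simp add: mult_ac)

lemma weyl_scale: "weyl u (\<lambda>x. k * h x) = (\<lambda>x. k * weyl u h x)"
  unfolding weyl_def by (simp add: mult_ac)

lemma weyl_add: "weyl u (\<lambda>x. g x + h x) = (\<lambda>x. weyl u g x + weyl u h x)"
  unfolding weyl_def by (simp add: algebra_simps)

lemma weyl_weyl: "weyl u (weyl v h) x = chr (snd v) (fst u) * weyl (padd u v) h x"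
  unfolding weyl_def padd_def by (simp add: chr_vadd_left chr_vadd_right vadd_assoc mult_ac)

lemma weyl_weyl_self: "weyl u (weyl u h) x = chr (snd u) (fst u) * h x"
  unfolding weyl_def by (simp add: chr_vadd_right mult_ac)

lemma padd_comm: "padd u v = padd v u"
  unfolding padd_def by (simp add: vadd_comm)

lemma weyl_commute: "weyl u (weyl v h) x = sympl_sign u v * weyl v (weyl u h) x"
proof -
  have "chr (snd v) (fst u) = sympl_sign u v * chr (snd u) (fst v)"
    unfolding sympl_sign_def sympl_def chr_def by (auto simp: vdot_comm)
  then show ?thesis
    unfolding weyl_weyl by (simp add: padd_comm[of u v] mult_ac)
qed

lemma weyl_weyl_commute: "weyl u (weyl v h) = (\<lambda>x. sympl_sign u v * weyl v (weyl u h) x)"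
  by (rule ext) (rule weyl_commute)

lemma weyl_commute_isotropic: "\<not> sympl u v \<Longrightarrow> weyl u (weyl v h) = weyl v (weyl u h)"
  unfolding weyl_weyl_commute[of u v h] sympl_sign_def by simp

lemma ip_weyl_weyl: "ip (weyl u g) (weyl u h) = ip g h"
  for g h :: "('n::finite) f2vec \<Rightarrow> complex"
proof -
  have "ip (weyl u g) (weyl u h) = (\<Sum>x\<in>UNIV. g (vadd x (fst u)) * cnj (h (vadd x (fst u)))) / of_nat CARD('n f2vec)"
    unfolding ip_eq_sum weyl_def by (simp add: mult_ac)
  then show ?thesis
    using sum_vadd_shift[of "\<lambda>x. g x * cnj (h x)" "fst u"] by (simp add: ip_eq_sum)
qed

lemma ip_weyl: "ip (weyl (a, b) h) g = (\<Sum>x\<in>UNIV. h (vadd x a) * cnj (g x) * chr b x) / of_nat CARD(('n::finite) f2vec)"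
  for g h :: "('n::finite) f2vec \<Rightarrow> complex"
  unfolding ip_eq_sum weyl_def by (simp add: mult_ac)

text \<open>Parseval in the frequency variable, then a shift in the translation variable.\<close>
lemma sum_ip_weyl_mult_cnj:
  fixes h1 h2 g1 g2 :: "('n::finite) f2vec \<Rightarrow> complex"
  shows "(\<Sum>u\<in>UNIV. ip (weyl u h1) h2 * cnj (ip (weyl u g1) g2))
         = of_nat CARD('n f2vec) * ip h1 g1 * ip g2 h2"
proof -
  define N where "N = (of_nat CARD('n f2vec) :: complex)"
  have "N \<noteq> 0"
    unfolding N_def by simp
  have fourier: "(\<Sum>b\<in>UNIV. ip (weyl (a, b) h1) h2 * cnj (ip (weyl (a, b) g1) g2))
      = (\<Sum>x\<in>UNIV. h1 (vadd x a) * cnj (g1 (vadd x a)) * (g2 x * cnj (h2 x))) / N" for a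
  proof -
    have "ip (weyl (a, b) h1) h2 * cnj (ip (weyl (a, b) g1) g2)
        = (\<Sum>x\<in>UNIV. h1 (vadd x a) * cnj (h2 x) * chr b x) *
             cnj (\<Sum>y\<in>UNIV. g1 (vadd y a) * cnj (g2 y) * chr b y) / (N * N)" for b
      unfolding N_def
      by (simp only: ip_weyl complex_cnj_divide complex_cnj_of_nat times_divide_times_eq)
    then have "(\<Sum>b\<in>UNIV. ip (weyl (a, b) h1) h2 * cnj (ip (weyl (a, b) g1) g2))
        = N * (\<Sum>x\<in>UNIV. h1 (vadd x a) * cnj (h2 x) * cnj (g1 (vadd x a) * cnj (g2 x))) / (N * N)"
      unfolding N_def by (simp only: sum_divide_distrib[symmetric] parseval)
    also have "\<dots> = (\<Sum>x\<in>UNIV. h1 (vadd x a) * cnj (g1 (vadd x a)) * (g2 x * cnj (h2 x))) / N"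
      using \<open>N \<noteq> 0\<close> by (simp add: mult_ac)
    finally show ?thesis .
  qed
  have shift: "(\<Sum>a\<in>UNIV. h1 (vadd x a) * cnj (g1 (vadd x a))) = N * ip h1 g1" for x
    using \<open>N \<noteq> 0\<close> unfolding sum_vadd_shift[of "\<lambda>y. h1 y * cnj (g1 y)"] by (simp add: ip_eq_sum N_def)
  have "(\<Sum>u\<in>UNIV. ip (weyl u h1) h2 * cnj (ip (weyl u g1) g2))
      = (\<Sum>a\<in>UNIV. \<Sum>b\<in>UNIV. ip (weyl (a, b) h1) h2 * cnj (ip (weyl (a, b) g1) g2))"
    by (rule sum_UNIV_pair)
  also have "\<dots> = (\<Sum>x\<in>UNIV. (\<Sum>a\<in>UNIV. h1 (vadd x a) * cnj (g1 (vadd x a))) * (g2 x * cnj (h2 x))) / N"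
    unfolding fourier sum_divide_distrib[symmetric] sum_distrib_right
    by (rule arg_cong[where f="\<lambda>s. s / N"], rule sum.swap)
  also have "\<dots> = N * ip h1 g1 * ((\<Sum>x\<in>UNIV. g2 x * cnj (h2 x)) / N)"
    unfolding shift by (simp add: sum_distrib_left mult_ac)
  also have "\<dots> = N * ip h1 g1 * ip g2 h2"
    unfolding ip_eq_sum[of g2 h2] N_def ..
  finally show ?thesis
    unfolding N_def .
qed

section \<open>Weyl coefficients and the U^3 norm\<close>

definition weyl_coeff :: "(('n::finite) f2vec \<Rightarrow> complex) \<Rightarrow> 'n f2vec \<times> 'n f2vec \<Rightarrow> complex"
  where "weyl_coeff \<psi> u = ip (weyl u \<psi>) \<psi>"

lemma Delta_Delta_Delta_rotate: "Delta a (Delta b (Delta c f)) x = Delta b (Delta c (Delta a f)) x"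
  unfolding Delta_def by (simp add: vadd_assoc vadd_comm vadd_left_commute mult_ac)

lemma cnj_mult_self_mult_cnj: "cnj z * z * cnj (cnj z * z) = of_real ((cmod z)^4)"
proof -
  have "cnj z * z = of_real ((cmod z)^2)"
    by (subst complex_norm_square) (rule mult.commute)
  then show ?thesis
    by (simp flip: of_real_mult add: power4_eq_xxxx power2_eq_square mult_ac)
qed

lemma sum_Delta_Delta:
  fixes g :: "('n::finite) f2vec \<Rightarrow> complex"
  shows "of_nat CARD('n f2vec) * (\<Sum>x\<in>UNIV. \<Sum>b\<in>UNIV. \<Sum>c\<in>UNIV. Delta b (Delta c g) x)
       = (\<Sum>\<xi>\<in>UNIV. of_real ((cmod (\<Sum>x\<in>UNIV. g x * chr \<xi> x))^4))"
proof -
  define A where "A c = (\<Sum>y\<in>UNIV. Delta c g y)" for c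
  define G where "G \<xi> = (\<Sum>x\<in>UNIV. g x * chr \<xi> x)" for \<xi>
  have autocorrelation: "(\<Sum>x\<in>UNIV. \<Sum>b\<in>UNIV. Delta b (Delta c g) x) = A c * cnj (A c)" for c
  proof -
    have "(\<Sum>b\<in>UNIV. Delta b (Delta c g) x) = (\<Sum>b\<in>UNIV. Delta c g (vadd b x)) * cnj (Delta c g x)" for x
      unfolding Delta_def[of _ "Delta c g"] sum_distrib_right vadd_comm[of x] ..
    then show ?thesis
      unfolding sum_vadd_shift A_def by (simp add: sum_distrib_left mult.commute)
  qed
  have fourier_A: "(\<Sum>c\<in>UNIV. A c * chr \<xi> c) = cnj (G \<xi>) * G \<xi>" for \<xi>
  proof -
    have "A c * chr \<xi> c = (\<Sum>y\<in>UNIV. cnj (g y) * chr \<xi> y * (g (vadd y c) * chr \<xi> (vadd y c)))" for c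
      unfolding A_def Delta_def sum_distrib_right
      by (intro sum.cong refl) (simp add: chr_vadd_right mult_ac)
    then have "(\<Sum>c\<in>UNIV. A c * chr \<xi> c)
        = (\<Sum>c\<in>UNIV. \<Sum>y\<in>UNIV. cnj (g y) * chr \<xi> y * (g (vadd y c) * chr \<xi> (vadd y c)))"
      by (rule sum.cong[OF refl])
    also have "\<dots> = (\<Sum>y\<in>UNIV. cnj (g y) * chr \<xi> y * (\<Sum>c\<in>UNIV. g (vadd y c) * chr \<xi> (vadd y c)))"
      unfolding sum_distrib_left by (rule sum.swap)
    also have "\<dots> = (\<Sum>y\<in>UNIV. cnj (g y) * chr \<xi> y * G \<xi>)"
      unfolding sum_vadd_shift(2)[of "\<lambda>z. g z * chr \<xi> z"] G_def ..
    also have "\<dots> = cnj (G \<xi>) * G \<xi>"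
      by (simp add: G_def sum_distrib_right)
    finally show ?thesis .
  qed
  have "(\<Sum>x\<in>UNIV. \<Sum>b\<in>UNIV. \<Sum>c\<in>UNIV. Delta b (Delta c g) x)
      = (\<Sum>x\<in>UNIV. \<Sum>c\<in>UNIV. \<Sum>b\<in>UNIV. Delta b (Delta c g) x)"
    by (rule sum.cong[OF refl], rule sum.swap)
  also have "\<dots> = (\<Sum>c\<in>UNIV. A c * cnj (A c))"
    unfolding autocorrelation[symmetric] by (rule sum.swap)
  finally have "of_nat CARD('n f2vec) * (\<Sum>x\<in>UNIV. \<Sum>b\<in>UNIV. \<Sum>c\<in>UNIV. Delta b (Delta c g) x)
      = (\<Sum>\<xi>\<in>UNIV. (\<Sum>c\<in>UNIV. A c * chr \<xi> c) * cnj (\<Sum>c\<in>UNIV. A c * chr \<xi> c))"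
    by (simp only: parseval)
  then show ?thesis
    unfolding fourier_A cnj_mult_self_mult_cnj G_def .
qed

lemma U3_eq_sum_weyl_coeff:
  fixes \<psi> :: "('n::finite) f2vec \<Rightarrow> complex"
  shows "U3 \<psi> = ((\<Sum>u\<in>UNIV. (cmod (weyl_coeff \<psi> u))^4) / real CARD('n f2vec)) powr (1/8)"
proof -
  define N where "N = (of_nat CARD('n f2vec) :: complex)"
  have "N \<noteq> 0"
    unfolding N_def by simp
  have fourier_Delta: "(\<Sum>x\<in>UNIV. Delta a \<psi> x * chr \<xi> x) = N * weyl_coeff \<psi> (a, \<xi>)" for a \<xi>
    using \<open>N \<noteq> 0\<close> by (simp add: weyl_coeff_def ip_weyl Delta_def N_def)
  have scale: "of_real ((cmod (N * z))^4) = N^4 * of_real ((cmod z)^4)" for z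
    unfolding N_def by (simp add: norm_mult power_mult_distrib)
  define S where "S = (\<Sum>x\<in>UNIV. \<Sum>a\<in>UNIV. \<Sum>b\<in>UNIV. \<Sum>c\<in>UNIV. Delta a (Delta b (Delta c \<psi>)) x)"
  have "S = (\<Sum>a\<in>UNIV. \<Sum>x\<in>UNIV. \<Sum>b\<in>UNIV. \<Sum>c\<in>UNIV. Delta b (Delta c (Delta a \<psi>)) x)"
    unfolding S_def by (rule trans[OF sum.swap]) (intro sum.cong refl Delta_Delta_Delta_rotate)
  then have "N * S
      = (\<Sum>a\<in>UNIV. N * (\<Sum>x\<in>UNIV. \<Sum>b\<in>UNIV. \<Sum>c\<in>UNIV. Delta b (Delta c (Delta a \<psi>)) x))"
    by (simp only: sum_distrib_left[symmetric])
  also have "\<dots> = (\<Sum>a\<in>UNIV. \<Sum>\<xi>\<in>UNIV. of_real ((cmod (N * weyl_coeff \<psi> (a, \<xi>)))^4))"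
    unfolding N_def sum_Delta_Delta fourier_Delta[unfolded N_def] ..
  also have "\<dots> = N^4 * of_real (\<Sum>u\<in>UNIV. (cmod (weyl_coeff \<psi> u))^4)"
    unfolding scale sum_UNIV_pair[of "\<lambda>u. (cmod (weyl_coeff \<psi> u))^4"]
    by (simp add: sum_distrib_left)
  finally have "S / (N * N * N * N) = of_real (\<Sum>u\<in>UNIV. (cmod (weyl_coeff \<psi> u))^4) / N"
    using \<open>N \<noteq> 0\<close> by (simp add: field_simps power4_eq_xxxx)
  moreover have "Ex (\<lambda>x. Ex (\<lambda>a. Ex (\<lambda>b. Ex (\<lambda>c. Delta a (Delta b (Delta c \<psi>)) x))))
      = S / (N * N * N * N)"
    unfolding Ex_def S_def N_def by (simp only: sum_divide_distrib[symmetric] divide_divide_eq_left)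
  ultimately show ?thesis
    unfolding U3_def N_def by simp
qed

section \<open>Isotropic and Lagrangian subspaces\<close>

lemma padd_padd_swap: "padd (padd a b) (padd c d) = padd (padd a c) (padd b d)"
  unfolding padd_def by (simp add: vadd_assoc vadd_left_commute)

lemma padd_vzero [simp]: "padd u (vzero, vzero) = u" "padd (vzero, vzero) u = u"
  unfolding padd_def by simp_all

lemma padd_self [simp]: "padd u u = (vzero, vzero)"
  unfolding padd_def by simp

lemma padd_eq_vzero_iff: "padd u v = (vzero, vzero) \<longleftrightarrow> u = v"
  unfolding padd_def by (cases u, cases v) (simp add: vadd_eq_vzero_iff)

lemma f2_subspace_iff:
  "f2_subspace L \<longleftrightarrow> (vzero, vzero) \<in> L \<and> (\<forall>u\<in>L. \<forall>v\<in>L. padd u v \<in> L)"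
  unfolding f2_subspace_def padd_def ..

lemma sympl_comm: "sympl u v = sympl v u"
  unfolding sympl_def by (auto simp: vdot_comm)

lemma sympl_self [simp]: "\<not> sympl u u"
  unfolding sympl_def by (simp add: vdot_comm)

lemma sympl_vzero [simp]: "\<not> sympl (vzero, vzero) u" "\<not> sympl u (vzero, vzero)"
  unfolding sympl_def by simp_all

lemma sympl_padd_left: "sympl (padd u v) w \<longleftrightarrow> sympl u w \<noteq> sympl v w"
  unfolding sympl_def padd_def by (auto simp: vdot_vadd_left)

lemma sympl_padd_right: "sympl w (padd u v) \<longleftrightarrow> sympl w u \<noteq> sympl w v"
  using sympl_padd_left[of u v w] by (simp add: sympl_comm)

lemma isotropic_padd_set:
  assumes "isotropic A" "isotropic B" and orth: "\<And>a b. a \<in> A \<Longrightarrow> b \<in> B \<Longrightarrow> \<not> sympl a b"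
  shows "isotropic {padd a b |a b. a \<in> A \<and> b \<in> B}" (is "isotropic ?M")
  unfolding isotropic_def f2_subspace_iff
proof (intro conjI ballI)
  have sub: "f2_subspace A" "f2_subspace B"
    and iso: "\<forall>x\<in>A. \<forall>y\<in>A. \<not> sympl x y" "\<forall>x\<in>B. \<forall>y\<in>B. \<not> sympl x y"
    using assms(1,2) unfolding isotropic_def by auto
  have "padd (vzero, vzero) (vzero, vzero) \<in> ?M"
    using sub unfolding f2_subspace_iff by blast
  then show "(vzero, vzero) \<in> ?M"
    by simp
  fix u v assume "u \<in> ?M" "v \<in> ?M"
  then obtain a b a' b' where uv: "u = padd a b" "v = padd a' b'"
    and in_AB: "a \<in> A" "b \<in> B" "a' \<in> A" "b' \<in> B"
    by blast
  have "padd a a' \<in> A" "padd b b' \<in> B"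
    using sub in_AB unfolding f2_subspace_iff by simp_all
  then show "padd u v \<in> ?M"
    unfolding uv padd_padd_swap by blast
  show "\<not> sympl u v"
    unfolding uv using in_AB iso orth[of a b'] orth[of a' b]
    by (simp add: sympl_padd_left sympl_padd_right sympl_comm[of b])
qed

lemma lagrangian_sympl_witness:
  assumes "lagrangian L" and "u \<notin> L"
  shows "\<exists>v\<in>L. sympl u v"
proof (rule ccontr)
  assume orth: "\<not> (\<exists>v\<in>L. sympl u v)"
  define M where "M = {padd a b |a b. a \<in> {(vzero, vzero), u} \<and> b \<in> L}"
  have "isotropic {(vzero, vzero), u}"
    unfolding isotropic_def f2_subspace_iff by auto
  then have "isotropic M"
    unfolding M_def using assms(1) orth by (intro isotropic_padd_set) (auto simp: lagrangian_def)
  moreover have "L \<subseteq> M"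
  proof
    fix b assume "b \<in> L"
    then have "padd (vzero, vzero) b \<in> M"
      unfolding M_def by blast
    then show "b \<in> M"
      by simp
  qed
  moreover have "padd u (vzero, vzero) \<in> M"
    using assms(1) unfolding M_def lagrangian_def isotropic_def f2_subspace_iff by blast
  then have "u \<in> M"
    by simp
  ultimately show False
    using assms unfolding lagrangian_def by blast
qed

section \<open>Weyl coefficients of unit vectors\<close>

lemma weyl_vzero [simp]: "weyl (vzero, vzero) h = h"
  unfolding weyl_def by simp

lemma weyl_coeff_vzero: "weyl_coeff \<psi> (vzero, vzero) = ip \<psi> \<psi>"
  unfolding weyl_coeff_def by simp

lemma sum_weyl_coeff_sq:
  fixes \<psi> :: "('n::finite) f2vec \<Rightarrow> complex"
  assumes "ip \<psi> \<psi> = 1"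
  shows "(\<Sum>u\<in>UNIV. (cmod (weyl_coeff \<psi> u))^2) = real CARD('n f2vec)"
proof -
  have "of_real (\<Sum>u\<in>UNIV. (cmod (weyl_coeff \<psi> u))^2)
      = (\<Sum>u\<in>UNIV. ip (weyl u \<psi>) \<psi> * cnj (ip (weyl u \<psi>) \<psi>))"
    by (simp only: of_real_sum complex_norm_square weyl_coeff_def)
  also have "\<dots> = of_real (real CARD('n f2vec))"
    unfolding sum_ip_weyl_mult_cnj assms by simp
  finally show ?thesis
    by (simp only: of_real_eq_iff)
qed

text \<open>Cauchy-Schwarz: \<open>norm2 (weyl u \<psi> - c * \<psi>)\<^sup>2 = 1 - |c|\<^sup>2\<close> for the coefficient
  \<open>c = weyl_coeff \<psi> u\<close>.\<close>
lemma weyl_coeff_le_1: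
  assumes "ip \<psi> \<psi> = 1"
  shows "cmod (weyl_coeff \<psi> u) \<le> 1"
    and "cmod (weyl_coeff \<psi> u) = 1 \<Longrightarrow> weyl u \<psi> = (\<lambda>x. weyl_coeff \<psi> u * \<psi> x)"
proof -
  define k where "k = weyl_coeff \<psi> u"
  define D where "D = (\<lambda>x. weyl u \<psi> x - k * \<psi> x)"
  have "ip (weyl u \<psi>) \<psi> = k" "ip \<psi> (weyl u \<psi>) = cnj k"
    unfolding k_def weyl_coeff_def cnj_ip by simp_all
  then have "ip D D = 1 - k * cnj k"
    unfolding D_def ip_diff_left ip_diff_right ip_scale_left ip_scale_right ip_weyl_weyl assms
    by (simp add: algebra_simps)
  then have "of_real ((norm2 D)^2) = (of_real (1 - (cmod k)^2) :: complex)"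
    by (simp only: ip_self[symmetric] of_real_diff of_real_1 complex_norm_square)
  then have norm2_D: "(norm2 D)^2 = 1 - (cmod k)^2"
    by (simp only: of_real_eq_iff)
  then have "(cmod k)^2 \<le> 1^2"
    using zero_le_power2[of "norm2 D"] by simp
  then show "cmod k \<le> 1"
    by (rule power2_le_imp_le) simp
  assume "cmod k = 1"
  then have "D = (\<lambda>x. 0)"
    using norm2_D by (simp flip: norm2_eq_0_iff)
  then show "weyl u \<psi> = (\<lambda>x. k * \<psi> x)"
    unfolding D_def by (simp add: fun_eq_iff)
qed

lemma weyl_coeff_eigen:
  assumes "ip \<psi> \<psi> = 1" and "weyl u \<psi> = (\<lambda>x. k * \<psi> x)"
  shows "weyl_coeff \<psi> u = k" and "cmod k = 1"
proof -
  show "weyl_coeff \<psi> u = k"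
    unfolding weyl_coeff_def assms(2) ip_scale_left assms(1) by simp
  have "k * cnj k = 1"
    using ip_weyl_weyl[of u \<psi> \<psi>] unfolding assms ip_scale_left ip_scale_right by (simp add: mult_ac)
  then have "of_real ((cmod k)^2) = (1 :: complex)"
    by (simp only: complex_norm_square)
  then have "(cmod k)^2 = 1"
    by (simp only: of_real_eq_1_iff)
  then show "cmod k = 1"
    using norm_ge_zero[of k] by (auto simp: power2_eq_1_iff)
qed

lemma weyl_coeff_eq_0_if_sympl:
  assumes "weyl v \<psi> = (\<lambda>x. k * \<psi> x)" and "cmod k = 1" and "sympl u v"
  shows "weyl_coeff \<psi> u = 0"
proof -
  have "weyl v (weyl u \<psi>) x = - weyl u (weyl v \<psi>) x" for x
    using weyl_commute[of v u \<psi> x] assms(3) by (simp add: sympl_sign_def sympl_comm)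
  then have eigen: "weyl v (weyl u \<psi>) = (\<lambda>x. (- k) * weyl u \<psi> x)"
    unfolding assms(1) weyl_scale by (simp add: fun_eq_iff)
  have "(- k) * (cnj k * weyl_coeff \<psi> u) = weyl_coeff \<psi> u"
    using ip_weyl_weyl[of v "weyl u \<psi>" \<psi>]
    unfolding weyl_coeff_def eigen assms(1) ip_scale_left ip_scale_right .
  moreover have "(- k) * (cnj k * weyl_coeff \<psi> u) = - ((k * cnj k) * weyl_coeff \<psi> u)"
    by (simp add: mult_ac)
  moreover have "k * cnj k = 1"
    using assms(2) by (simp flip: complex_norm_square)
  ultimately show ?thesis
    by simp
qed

lemma weyl_coeff_projection:
  fixes \<psi> f :: "('n::finite) f2vec \<Rightarrow> complex"
  assumes "\<And>u. u \<notin> L \<Longrightarrow> weyl_coeff \<psi> u = 0"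
  shows "(\<Sum>u\<in>L. ip (weyl u f) f * cnj (weyl_coeff \<psi> u)) = of_nat CARD('n f2vec) * of_real ((cmod (ip f \<psi>))^2)"
proof -
  have "(\<Sum>u\<in>L. ip (weyl u f) f * cnj (weyl_coeff \<psi> u)) = (\<Sum>u\<in>UNIV. ip (weyl u f) f * cnj (weyl_coeff \<psi> u))"
    by (rule sum.mono_neutral_left) (auto simp: assms)
  also have "\<dots> = of_nat CARD('n f2vec) * (ip f \<psi> * ip \<psi> f)"
    unfolding weyl_coeff_def sum_ip_weyl_mult_cnj by (simp add: mult_ac)
  finally show ?thesis
    unfolding ip_mult_ip_swap .
qed

lemma sum_sq_eq_sum_pow4_imp_0_or_1:
  fixes c :: "'a \<Rightarrow> real"
  assumes "finite A" and bounds: "\<And>u. u \<in> A \<Longrightarrow> 0 \<le> c u \<and> c u \<le> 1"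
    and "(\<Sum>u\<in>A. (c u)^2) = (\<Sum>u\<in>A. (c u)^4)" and "u \<in> A"
  shows "c u = 0 \<or> c u = 1"
proof -
  have nonneg: "0 \<le> (c v)^2 * (1 - (c v)^2)" if "v \<in> A" for v
    using bounds[OF that] by (simp add: power_le_one)
  have "(\<Sum>v\<in>A. (c v)^2 * (1 - (c v)^2)) = 0"
    using assms(3) by (simp add: algebra_simps sum_subtractf power4_eq_xxxx power2_eq_square)
  then have "\<forall>v\<in>A. (c v)^2 * (1 - (c v)^2) = 0"
    by (subst (asm) sum_nonneg_eq_0_iff) (use \<open>finite A\<close> nonneg in auto)
  then have "(c u)^2 * (1 - (c u)^2) = 0"
    using \<open>u \<in> A\<close> by blast
  then show ?thesis
    using bounds[OF \<open>u \<in> A\<close>] by (auto simp: power2_eq_1_iff)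
qed

lemma stabilizer_state_weyl_coeff_0_or_1:
  fixes \<psi> :: "('n::finite) f2vec \<Rightarrow> complex"
  assumes "stabilizer_state \<psi>"
  shows "ip \<psi> \<psi> = 1" and "cmod (weyl_coeff \<psi> u) = 0 \<or> cmod (weyl_coeff \<psi> u) = 1"
proof -
  show unit: "ip \<psi> \<psi> = 1"
    using assms norm2_eq_1_iff unfolding stabilizer_state_def by blast
  define N where "N = real CARD('n f2vec)"
  define s where "s = (\<Sum>u\<in>UNIV. (cmod (weyl_coeff \<psi> u))^4) / N"
  have "s \<ge> 0"
    unfolding s_def N_def by (simp add: sum_nonneg)
  moreover have "s powr (1/8) = 1"
    using assms unfolding stabilizer_state_def U3_eq_sum_weyl_coeff s_def N_def by simp
  moreover have "s = (s powr (1/8)) powr 8"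
    using \<open>s \<ge> 0\<close> by (simp add: powr_powr powr_one)
  ultimately have "s = 1"
    by simp
  then have "(\<Sum>u\<in>UNIV. (cmod (weyl_coeff \<psi> u))^4) = (\<Sum>u\<in>UNIV. (cmod (weyl_coeff \<psi> u))^2)"
    unfolding s_def sum_weyl_coeff_sq[OF unit] N_def by simp
  then show "cmod (weyl_coeff \<psi> u) = 0 \<or> cmod (weyl_coeff \<psi> u) = 1"
    by (intro sum_sq_eq_sum_pow4_imp_0_or_1[where A=UNIV]) (auto simp: weyl_coeff_le_1[OF unit])
qed

lemma card_weyl_support:
  fixes \<psi> :: "('n::finite) f2vec \<Rightarrow> complex"
  assumes "ip \<psi> \<psi> = 1" and "\<And>u. cmod (weyl_coeff \<psi> u) = (if u \<in> S then 1 else 0)"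
  shows "card S = CARD('n f2vec)"
proof -
  have "(cmod (weyl_coeff \<psi> u))^2 = (if u \<in> S then 1 else 0)" for u
    using assms(2)[of u] by simp
  then have "real (card S) = (\<Sum>u\<in>UNIV. (cmod (weyl_coeff \<psi> u))^2)"
    by (simp add: sum.If_cases)
  then show ?thesis
    unfolding sum_weyl_coeff_sq[OF assms(1)] by simp
qed

text \<open>The projection formula for \<open>f = \<phi>\<close> reads \<open>2\<^sup>n |ip \<phi> \<psi>|\<^sup>2 = card S = 2\<^sup>n\<close>.\<close>
lemma cmod_ip_eq_1_if_same_eigenvalues:
  fixes \<psi> \<phi> :: "('n::finite) f2vec \<Rightarrow> complex"
  assumes "ip \<psi> \<psi> = 1" and "ip \<phi> \<phi> = 1"
    and support: "\<And>u. cmod (weyl_coeff \<psi> u) = (if u \<in> S then 1 else 0)"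
    and eigen: "\<And>u. u \<in> S \<Longrightarrow> weyl u \<phi> = (\<lambda>x. weyl_coeff \<psi> u * \<phi> x)"
  shows "cmod (ip \<phi> \<psi>) = 1"
proof -
  have "of_nat CARD('n f2vec) * of_real ((cmod (ip \<phi> \<psi>))^2)
      = (\<Sum>u\<in>S. ip (weyl u \<phi>) \<phi> * cnj (weyl_coeff \<psi> u))"
    using support by (intro weyl_coeff_projection[symmetric]) (metis norm_eq_zero zero_neq_one)
  also have "\<dots> = (\<Sum>u\<in>S. weyl_coeff \<psi> u * cnj (weyl_coeff \<psi> u))"
    using eigen assms(2) by (simp add: ip_scale_left)
  also have "\<dots> = of_nat (card S)"
    using support by (simp flip: complex_norm_square)
  also have "\<dots> = of_nat CARD('n f2vec)"
    using card_weyl_support[OF assms(1) support] by simp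
  finally have "of_real ((cmod (ip \<phi> \<psi>))^2) = (1 :: complex)"
    by (simp del: of_real_power)
  then have "(cmod (ip \<phi> \<psi>))^2 = 1"
    by (simp only: of_real_eq_1_iff)
  then show ?thesis
    using norm_ge_zero[of "ip \<phi> \<psi>"] by (auto simp: power2_eq_1_iff)
qed

section \<open>Stabilizer states are the joint eigenvectors of Lagrangians\<close>

lemma stabLag_eqI:
  assumes "lagrangian S" and support: "\<And>u. cmod (weyl_coeff \<psi> u) = (if u \<in> S then 1 else 0)"
  shows "stabLag \<psi> = S"
  unfolding stabLag_def fhat_Delta weyl_coeff_def[symmetric]
proof (rule the_equality)
  show "lagrangian S \<and> (\<forall>a b. cmod (weyl_coeff \<psi> (a, b)) = (if (a, b) \<in> S then 1 else 0))"
    using assms by simp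
  fix L assume "lagrangian L \<and> (\<forall>a b. cmod (weyl_coeff \<psi> (a, b)) = (if (a, b) \<in> L then 1 else 0))"
  then have "cmod (weyl_coeff \<psi> u) = (if u \<in> L then 1 else 0)" for u
    by (cases u) simp
  show "L = S"
  proof (rule set_eqI)
    fix u
    show "u \<in> L \<longleftrightarrow> u \<in> S"
      using \<open>cmod (weyl_coeff \<psi> u) = (if u \<in> L then 1 else 0)\<close> support[of u] by (auto split: if_splits)
  qed
qed

lemma weyl_coeff_padd_norm_1:
  assumes "ip \<psi> \<psi> = 1" and "cmod (weyl_coeff \<psi> u) = 1" and "cmod (weyl_coeff \<psi> v) = 1"
  shows "cmod (weyl_coeff \<psi> (padd u v)) = 1"
proof -
  have "weyl (padd u v) \<psi> x = chr (snd v) (fst u) * (weyl_coeff \<psi> u * weyl_coeff \<psi> v) * \<psi> x" for x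
  proof -
    have "weyl (padd u v) \<psi> x = chr (snd v) (fst u) * weyl u (weyl v \<psi>) x"
      unfolding weyl_weyl by simp
    also have "weyl u (weyl v \<psi>) x = weyl_coeff \<psi> u * weyl_coeff \<psi> v * \<psi> x"
      using weyl_coeff_le_1(2)[OF assms(1)] assms(2,3) by (simp add: weyl_scale)
    finally show ?thesis
      by (simp only: mult.assoc)
  qed
  then have "weyl (padd u v) \<psi> = (\<lambda>x. (chr (snd v) (fst u) * (weyl_coeff \<psi> u * weyl_coeff \<psi> v)) * \<psi> x)"
    by (rule ext)
  then show ?thesis
    using weyl_coeff_eigen[OF assms(1)] by simp
qed

lemma weyl_coeff_norm_1_not_sympl:
  assumes "ip \<psi> \<psi> = 1" and "cmod (weyl_coeff \<psi> u) = 1" and "cmod (weyl_coeff \<psi> v) = 1"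
  shows "\<not> sympl u v"
proof
  assume "sympl u v"
  then have "weyl_coeff \<psi> u = 0"
    by (rule weyl_coeff_eq_0_if_sympl[OF weyl_coeff_le_1(2)[OF assms(1,3)] assms(3)])
  then show False
    using assms(2) by simp
qed

lemma stabilizer_weyl_support_lagrangian:
  fixes \<psi> :: "('n::finite) f2vec \<Rightarrow> complex"
  assumes "stabilizer_state \<psi>"
  shows "lagrangian {u. cmod (weyl_coeff \<psi> u) = 1}" (is "lagrangian ?S")
proof -
  note unit = stabilizer_state_weyl_coeff_0_or_1(1)[OF assms]
  have support: "cmod (weyl_coeff \<psi> u) = (if u \<in> ?S then 1 else 0)" for u
    using stabilizer_state_weyl_coeff_0_or_1(2)[OF assms, of u] by auto
  have "(vzero, vzero) \<in> ?S"
    using unit by (simp add: weyl_coeff_vzero)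
  moreover have "\<forall>u\<in>?S. \<forall>v\<in>?S. padd u v \<in> ?S \<and> \<not> sympl u v"
    using weyl_coeff_padd_norm_1[OF unit] weyl_coeff_norm_1_not_sympl[OF unit] by blast
  ultimately have "isotropic ?S"
    unfolding isotropic_def f2_subspace_iff by blast
  moreover have "w \<in> ?S" if "isotropic M" "?S \<subseteq> M" "w \<in> M" for M w
  proof -
    have "weyl u (weyl w \<psi>) = (\<lambda>x. weyl_coeff \<psi> u * weyl w \<psi> x)" if "u \<in> ?S" for u
    proof -
      have "\<not> sympl u w"
        using that \<open>isotropic M\<close> \<open>?S \<subseteq> M\<close> \<open>w \<in> M\<close> unfolding isotropic_def by blast
      then have "weyl u (weyl w \<psi>) = weyl w (weyl u \<psi>)"
        by (rule weyl_commute_isotropic)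
      also have "weyl u \<psi> = (\<lambda>x. weyl_coeff \<psi> u * \<psi> x)"
        using weyl_coeff_le_1(2)[OF unit] that by simp
      finally show ?thesis
        unfolding weyl_scale .
    qed
    moreover have "ip (weyl w \<psi>) (weyl w \<psi>) = 1"
      unfolding ip_weyl_weyl by (rule unit)
    ultimately have "cmod (ip (weyl w \<psi>) \<psi>) = 1"
      using cmod_ip_eq_1_if_same_eigenvalues[OF unit _ support] by blast
    then show ?thesis
      unfolding weyl_coeff_def by simp
  qed
  ultimately show ?thesis
    unfolding lagrangian_def by blast
qed

text \<open>The zero function is a joint eigenvector in this sense; nonvanishing is assumed separately.\<close>
definition joint_eigen ::
    "('n f2vec \<times> 'n f2vec) set \<Rightarrow> (('n::finite) f2vec \<Rightarrow> complex) \<Rightarrow> bool"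
  where "joint_eigen L h \<longleftrightarrow> (\<forall>u\<in>L. \<exists>k. weyl u h = (\<lambda>x. k * h x))"

lemma weyl_coeff_joint_eigen:
  assumes "lagrangian L" and "ip \<psi> \<psi> = 1" and "joint_eigen L \<psi>"
  shows "cmod (weyl_coeff \<psi> u) = (if u \<in> L then 1 else 0)"
proof (cases "u \<in> L")
  case True
  then show ?thesis
    using assms(3) weyl_coeff_eigen[OF assms(2)] unfolding joint_eigen_def by fastforce
next
  case False
  then obtain v k where "v \<in> L" "sympl u v" and eigen: "weyl v \<psi> = (\<lambda>x. k * \<psi> x)"
    using lagrangian_sympl_witness[OF assms(1)] assms(3) unfolding joint_eigen_def by blast
  then show ?thesis
    using False weyl_coeff_eq_0_if_sympl[OF eigen weyl_coeff_eigen(2)[OF assms(2) eigen]] by simp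
qed

lemma stabilizer_state_stabLag_iff:
  fixes \<psi> :: "('n::finite) f2vec \<Rightarrow> complex"
  assumes "lagrangian L"
  shows "stabilizer_state \<psi> \<and> stabLag \<psi> = L \<longleftrightarrow> ip \<psi> \<psi> = 1 \<and> joint_eigen L \<psi>"
proof
  assume "stabilizer_state \<psi> \<and> stabLag \<psi> = L"
  then have stab: "stabilizer_state \<psi>" and "stabLag \<psi> = L"
    by simp_all
  note unit = stabilizer_state_weyl_coeff_0_or_1(1)[OF stab]
  have "stabLag \<psi> = {u. cmod (weyl_coeff \<psi> u) = 1}"
    using stabilizer_state_weyl_coeff_0_or_1(2)[OF stab]
    by (intro stabLag_eqI stabilizer_weyl_support_lagrangian stab) auto
  then have "L = {u. cmod (weyl_coeff \<psi> u) = 1}"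
    using \<open>stabLag \<psi> = L\<close> by simp
  then show "ip \<psi> \<psi> = 1 \<and> joint_eigen L \<psi>"
    unfolding joint_eigen_def using unit weyl_coeff_le_1(2)[OF unit] by blast
next
  assume "ip \<psi> \<psi> = 1 \<and> joint_eigen L \<psi>"
  then have unit: "ip \<psi> \<psi> = 1" and support: "\<And>u. cmod (weyl_coeff \<psi> u) = (if u \<in> L then 1 else 0)"
    using weyl_coeff_joint_eigen[OF assms] by simp_all
  have "(cmod (weyl_coeff \<psi> u))^4 = (if u \<in> L then 1 else 0)" for u
    using support[of u] by simp
  then have "(\<Sum>u\<in>UNIV. (cmod (weyl_coeff \<psi> u))^4) = real (card L)"
    by (simp add: sum.If_cases)
  then have "U3 \<psi> = 1"
    unfolding U3_eq_sum_weyl_coeff card_weyl_support[OF unit support] by simp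
  then show "stabilizer_state \<psi> \<and> stabLag \<psi> = L"
    unfolding stabilizer_state_def norm2_eq_1_iff using unit stabLag_eqI[OF assms support] by simp
qed

lemma joint_eigen_scale: "joint_eigen L h \<Longrightarrow> joint_eigen L (\<lambda>x. c * h x)"
  unfolding joint_eigen_def weyl_scale by (metis mult.left_commute)

text \<open>With \<open>\<sigma>\<^sup>2 * chr (snd w) (fst w) = 1\<close>, the operator \<open>\<sigma> * weyl w\<close> is an involution
  commuting with the Weyl operators of \<open>F\<close>: either \<open>h + \<sigma> * weyl w h\<close> is a nonzero
  eigenvector of it, or \<open>h\<close> already is one.\<close>
lemma joint_eigen_insert:
  assumes "joint_eigen F h" and "h \<noteq> (\<lambda>x. 0)" and "\<And>u. u \<in> F \<Longrightarrow> \<not> sympl u w"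
  shows "\<exists>h'. h' \<noteq> (\<lambda>x. 0) \<and> joint_eigen (insert w F) h'"
proof -
  define \<sigma> where "\<sigma> = (if vdot (fst w) (snd w) then \<i> else 1)"
  have "\<sigma> \<noteq> 0" and \<sigma>: "\<sigma> * chr (snd w) (fst w) = inverse \<sigma>"
    unfolding \<sigma>_def chr_def by (simp_all add: vdot_comm)
  define h' where "h' x = h x + \<sigma> * weyl w h x" for x
  have "joint_eigen F h'"
    unfolding joint_eigen_def
  proof
    fix u assume "u \<in> F"
    then obtain k where k: "weyl u h = (\<lambda>x. k * h x)"
      using assms(1) unfolding joint_eigen_def by blast
    have "weyl u (weyl w h) = (\<lambda>x. k * weyl w h x)"
      unfolding weyl_commute_isotropic[OF assms(3)[OF \<open>u \<in> F\<close>]] k weyl_scale ..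
    then show "\<exists>k. weyl u h' = (\<lambda>x. k * h' x)"
      unfolding h'_def[abs_def] weyl_add weyl_scale k by (auto simp: algebra_simps)
  qed
  moreover have "weyl w h' = (\<lambda>x. inverse \<sigma> * h' x)"
  proof
    fix x
    have "weyl w h' x = weyl w h x + \<sigma> * chr (snd w) (fst w) * h x"
      unfolding h'_def[abs_def] weyl_add weyl_scale weyl_weyl_self by (simp add: mult.assoc)
    also have "\<dots> = inverse \<sigma> * h' x"
      unfolding \<sigma> h'_def using \<open>\<sigma> \<noteq> 0\<close> by (simp add: algebra_simps)
    finally show "weyl w h' x = inverse \<sigma> * h' x" .
  qed
  moreover have "weyl w h = (\<lambda>x. - inverse \<sigma> * h x)" if "h' = (\<lambda>x. 0)"
  proof
    fix x
    have "\<sigma> * weyl w h x = - h x"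
      using that unfolding h'_def by (simp add: fun_eq_iff eq_neg_iff_add_eq_0 add.commute)
    have "weyl w h x = inverse \<sigma> * (\<sigma> * weyl w h x)"
      using \<open>\<sigma> \<noteq> 0\<close> by simp
    also have "\<dots> = - inverse \<sigma> * h x"
      unfolding \<open>\<sigma> * weyl w h x = - h x\<close> by simp
    finally show "weyl w h x = - inverse \<sigma> * h x" .
  qed
  ultimately show ?thesis
    using assms(1,2) unfolding joint_eigen_def by (cases "h' = (\<lambda>x. 0)") blast+
qed

lemma joint_eigen_exists:
  assumes "isotropic L"
  shows "\<exists>\<psi> :: ('n::finite) f2vec \<Rightarrow> complex. ip \<psi> \<psi> = 1 \<and> joint_eigen L \<psi>"
proof -
  have "F \<subseteq> L \<Longrightarrow> \<exists>h :: 'n f2vec \<Rightarrow> complex. h \<noteq> (\<lambda>x. 0) \<and> joint_eigen F h" for F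
  proof (induction F rule: finite_induct[OF finite])
    case 1
    show ?case
      unfolding joint_eigen_def by (rule exI[of _ "\<lambda>x. 1"]) (simp add: fun_eq_iff)
  next
    case (2 w F)
    then obtain h :: "'n f2vec \<Rightarrow> complex" where "joint_eigen F h" "h \<noteq> (\<lambda>x. 0)"
      by blast
    moreover have "\<And>u. u \<in> F \<Longrightarrow> \<not> sympl u w"
      using assms "2.prems" unfolding isotropic_def by blast
    ultimately show ?case
      by (rule joint_eigen_insert)
  qed
  then obtain h :: "'n f2vec \<Rightarrow> complex" where "h \<noteq> (\<lambda>x. 0)" "joint_eigen L h"
    by blast
  then have "norm2 h \<noteq> 0"
    by (simp add: norm2_eq_0_iff)
  define \<psi> where "\<psi> x = of_real (1 / norm2 h) * h x" for x
  have "ip \<psi> \<psi> = 1"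
    unfolding \<psi>_def[abs_def] ip_scale_left ip_scale_right ip_self
    using \<open>norm2 h \<noteq> 0\<close> by (simp flip: of_real_mult add: power2_eq_square)
  moreover have "joint_eigen L \<psi>"
    unfolding \<psi>_def[abs_def] by (rule joint_eigen_scale) fact
  ultimately show ?thesis
    by blast
qed

section \<open>Overlaps with the translates of a stabilizer state\<close>

lemma joint_eigen_weyl_coeff:
  assumes "joint_eigen L \<psi>" and "ip \<psi> \<psi> = 1" and "u \<in> L"
  shows "weyl u \<psi> = (\<lambda>x. weyl_coeff \<psi> u * \<psi> x)"
  using assms weyl_coeff_eigen(1)[OF assms(2)] unfolding joint_eigen_def by blast

lemma weyl_coeff_weyl: "weyl_coeff (weyl v \<phi>) u = sympl_sign u v * weyl_coeff \<phi> u"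
  unfolding weyl_coeff_def weyl_weyl_commute[of u v \<phi>] ip_scale_left ip_weyl_weyl ..

lemma joint_eigen_weyl:
  assumes "joint_eigen L \<phi>"
  shows "joint_eigen L (weyl v \<phi>)"
  unfolding joint_eigen_def
proof
  fix u assume "u \<in> L"
  then obtain k where k: "weyl u \<phi> = (\<lambda>x. k * \<phi> x)"
    using assms unfolding joint_eigen_def by blast
  have "weyl u (weyl v \<phi>) = (\<lambda>x. (sympl_sign u v * k) * weyl v \<phi> x)"
    unfolding weyl_weyl_commute[of u v \<phi>] k weyl_scale by (simp add: mult.assoc)
  then show "\<exists>k. weyl u (weyl v \<phi>) = (\<lambda>x. k * weyl v \<phi> x)"
    by blast
qed

lemma cmod_ip_eq_if_weyl_coeff_eq:
  assumes "weyl_coeff \<psi> = weyl_coeff \<phi>"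
  shows "cmod (ip f \<psi>) = cmod (ip f \<phi>)"
proof -
  have "of_real ((cmod (ip f \<psi>))^2) = (of_real ((cmod (ip f \<phi>))^2) :: complex)"
    using weyl_coeff_projection[of UNIV \<psi> f] weyl_coeff_projection[of UNIV \<phi> f] assms by simp
  then have "(cmod (ip f \<psi>))^2 = (cmod (ip f \<phi>))^2"
    by (simp only: of_real_eq_iff)
  then show ?thesis
    by (simp add: power2_eq_iff_nonneg)
qed

lemma weyl_coeff_eq_if_ip_neq_0:
  assumes "lagrangian L"
    and "ip \<phi> \<phi> = 1" "joint_eigen L \<phi>" and "ip \<psi> \<psi> = 1" "joint_eigen L \<psi>"
    and "ip \<phi> \<psi> \<noteq> 0"
  shows "weyl_coeff \<phi> = weyl_coeff \<psi>"
proof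
  fix u
  show "weyl_coeff \<phi> u = weyl_coeff \<psi> u"
  proof (cases "u \<in> L")
    case True
    have "ip \<phi> \<psi> = ip (weyl u \<phi>) (weyl u \<psi>)"
      by (simp only: ip_weyl_weyl)
    also have "\<dots> = weyl_coeff \<phi> u * cnj (weyl_coeff \<psi> u) * ip \<phi> \<psi>"
      using True assms(2-5) by (simp add: joint_eigen_weyl_coeff ip_scale_left ip_scale_right mult.assoc)
    finally have "weyl_coeff \<phi> u * cnj (weyl_coeff \<psi> u) = 1"
      using assms(6) by simp
    moreover have "weyl_coeff \<psi> u * cnj (weyl_coeff \<psi> u) = 1"
      using weyl_coeff_joint_eigen[OF assms(1,4,5), of u] True by (simp flip: complex_norm_square)
    ultimately show ?thesis
      by (metis mult_cancel_right one_neq_zero mult_zero_left)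
  next
    case False
    then show ?thesis
      using weyl_coeff_joint_eigen[OF assms(1,2,3), of u] weyl_coeff_joint_eigen[OF assms(1,4,5), of u] by simp
  qed
qed

text \<open>Some translate of \<open>\<phi>\<^sub>0\<close> is not orthogonal to \<open>\<psi>\<close>, so it has the same Weyl
  coefficients as \<open>\<psi>\<close>; and the overlap with \<open>f\<close> only depends on those.\<close>
lemma cmod_ip_eq_weyl_translate:
  fixes \<phi>\<^sub>0 \<psi> :: "('n::finite) f2vec \<Rightarrow> complex"
  assumes "lagrangian L"
    and "ip \<phi>\<^sub>0 \<phi>\<^sub>0 = 1" "joint_eigen L \<phi>\<^sub>0" and "ip \<psi> \<psi> = 1" "joint_eigen L \<psi>"
  shows "\<exists>v. cmod (ip f \<psi>) = cmod (ip f (weyl v \<phi>\<^sub>0))"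
proof -
  have "(\<Sum>v\<in>UNIV. ip (weyl v \<phi>\<^sub>0) \<psi> * cnj (ip (weyl v \<phi>\<^sub>0) \<psi>)) \<noteq> 0"
    unfolding sum_ip_weyl_mult_cnj assms(2,4) by simp
  then obtain v where "ip (weyl v \<phi>\<^sub>0) \<psi> \<noteq> 0"
    by (metis (no_types, lifting) mult_zero_left sum.neutral)
  moreover have "ip (weyl v \<phi>\<^sub>0) (weyl v \<phi>\<^sub>0) = 1" "joint_eigen L (weyl v \<phi>\<^sub>0)"
    using assms(2,3) by (simp_all add: ip_weyl_weyl joint_eigen_weyl)
  ultimately have "weyl_coeff (weyl v \<phi>\<^sub>0) = weyl_coeff \<psi>"
    using weyl_coeff_eq_if_ip_neq_0 assms by blast
  then show ?thesis
    using cmod_ip_eq_if_weyl_coeff_eq by metis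
qed

lemma sympl_sign_eq_chr: "sympl_sign w v = chr (fst w) (snd v) * chr (snd w) (fst v)"
  unfolding sympl_sign_def sympl_def chr_def by auto

lemma cnj_sympl_sign [simp]: "cnj (sympl_sign u v) = sympl_sign u v"
  unfolding sympl_sign_def by simp

lemma sympl_sign_padd: "sympl_sign u v * sympl_sign u' v = sympl_sign (padd u u') v"
  unfolding sympl_sign_def sympl_padd_left by auto

lemma sum_sympl_sign:
  "(\<Sum>v\<in>UNIV. sympl_sign w v) = (if w = (vzero, vzero) then (of_nat CARD(('n::finite) f2vec))^2 else 0)"
  for w :: "('n::finite) f2vec \<times> 'n f2vec"
proof -
  have "(\<Sum>v\<in>UNIV. sympl_sign w v) = (\<Sum>c\<in>UNIV. \<Sum>d\<in>UNIV. chr (snd w) c * chr (fst w) d)"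
    unfolding sympl_sign_eq_chr sum_UNIV_pair[of "\<lambda>v. chr (fst w) (snd v) * chr (snd w) (fst v)"]
    by (simp add: mult.commute)
  also have "\<dots> = (\<Sum>c\<in>UNIV. chr (snd w) c) * (\<Sum>d\<in>UNIV. chr (fst w) d)"
    by (simp only: sum_product)
  finally show ?thesis
    by (cases w) (simp add: sum_chr_right power2_eq_square)
qed

lemma sum_sympl_sign_parseval:
  fixes X :: "('n::finite) f2vec \<times> 'n f2vec \<Rightarrow> complex"
  shows "(\<Sum>v\<in>UNIV. (\<Sum>u\<in>A. sympl_sign u v * X u) * cnj (\<Sum>u\<in>A. sympl_sign u v * X u))
       = (of_nat CARD('n f2vec))^2 * (\<Sum>u\<in>A. X u * cnj (X u))"
proof -
  have "(\<Sum>v\<in>UNIV. (\<Sum>u\<in>A. sympl_sign u v * X u) * cnj (\<Sum>u\<in>A. sympl_sign u v * X u))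
      = (\<Sum>v\<in>UNIV. \<Sum>u\<in>A. \<Sum>u'\<in>A. X u * cnj (X u') * (sympl_sign u v * sympl_sign u' v))"
    by (simp add: cnj_sum sum_product mult_ac)
  also have "\<dots> = (\<Sum>u\<in>A. \<Sum>u'\<in>A. \<Sum>v\<in>UNIV. X u * cnj (X u') * (sympl_sign u v * sympl_sign u' v))"
    by (subst sum.swap) (rule sum.cong[OF refl], rule sum.swap)
  also have "\<dots> = (\<Sum>u\<in>A. \<Sum>u'\<in>A. X u * cnj (X u') * (if u = u' then (of_nat CARD('n f2vec))^2 else 0))"
    by (simp add: sympl_sign_padd sum_distrib_left[symmetric] sum_sympl_sign padd_eq_vzero_iff)
  also have "\<dots> = (of_nat CARD('n f2vec))^2 * (\<Sum>u\<in>A. X u * cnj (X u))"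
    by (simp add: if_distrib sum.delta sum_distrib_left mult_ac cong: if_cong)
  finally show ?thesis .
qed

lemma sum_cmod_ip_weyl_sq:
  fixes \<phi> f :: "('n::finite) f2vec \<Rightarrow> complex"
  assumes "ip \<phi> \<phi> = 1"
  shows "(\<Sum>v\<in>UNIV. (cmod (ip f (weyl v \<phi>)))^2) = real CARD('n f2vec) * (norm2 f)^2"
proof -
  have swap: "cmod (ip f (weyl v \<phi>)) = cmod (ip (weyl v \<phi>) f)" for v
    using complex_mod_cnj[of "ip (weyl v \<phi>) f"] unfolding cnj_ip .
  have "of_real (\<Sum>v\<in>UNIV. (cmod (ip f (weyl v \<phi>)))^2)
      = (\<Sum>v\<in>UNIV. ip (weyl v \<phi>) f * cnj (ip (weyl v \<phi>) f))"
    unfolding swap of_real_sum complex_norm_square ..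
  also have "\<dots> = of_real (real CARD('n f2vec) * (norm2 f)^2)"
    unfolding sum_ip_weyl_mult_cnj assms ip_self[of f] by simp
  finally show ?thesis
    by (simp only: of_real_eq_iff)
qed

text \<open>By the projection formula, \<open>v \<mapsto> |ip f (weyl v \<phi>)|\<^sup>2\<close> is the symplectic Fourier
  transform of a function supported on \<open>L\<close>; Parseval then computes its second moment.\<close>
lemma sum_cmod_ip_weyl_pow4:
  fixes \<phi> f :: "('n::finite) f2vec \<Rightarrow> complex"
  assumes "lagrangian L" and "ip \<phi> \<phi> = 1" and "joint_eigen L \<phi>"
  shows "(\<Sum>v\<in>UNIV. (cmod (ip f (weyl v \<phi>)))^4) = (\<Sum>u\<in>L. (cmod (ip (weyl u f) f))^2)"
proof -
  define N where "N = (of_nat CARD('n f2vec) :: complex)"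
  define X where "X u = ip (weyl u f) f * cnj (weyl_coeff \<phi> u)" for u
  have support: "cmod (weyl_coeff (weyl v \<phi>) u) = (if u \<in> L then 1 else 0)" for u v
    using weyl_coeff_joint_eigen[OF assms(1)] assms(2,3) by (simp add: ip_weyl_weyl joint_eigen_weyl)
  have overlap: "N * of_real ((cmod (ip f (weyl v \<phi>)))^2) = (\<Sum>u\<in>L. sympl_sign u v * X u)" for v
  proof -
    have "N * of_real ((cmod (ip f (weyl v \<phi>)))^2) = (\<Sum>u\<in>L. ip (weyl u f) f * cnj (weyl_coeff (weyl v \<phi>) u))"
      unfolding N_def using support by (intro weyl_coeff_projection[symmetric]) (metis norm_eq_zero zero_neq_one)
    then show ?thesis
      by (simp add: weyl_coeff_weyl X_def mult_ac)
  qed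
  have "N^2 * of_real (\<Sum>v\<in>UNIV. (cmod (ip f (weyl v \<phi>)))^4)
      = (\<Sum>v\<in>UNIV. (\<Sum>u\<in>L. sympl_sign u v * X u) * cnj (\<Sum>u\<in>L. sympl_sign u v * X u))"
    unfolding overlap[symmetric] of_real_sum sum_distrib_left N_def
    by (simp add: power2_eq_square power4_eq_xxxx mult_ac)
  also have "\<dots> = N^2 * (\<Sum>u\<in>L. X u * cnj (X u))"
    unfolding sum_sympl_sign_parseval N_def ..
  also have "(\<Sum>u\<in>L. X u * cnj (X u)) = of_real (\<Sum>u\<in>L. (cmod (ip (weyl u f) f))^2)"
    unfolding of_real_sum
  proof (rule sum.cong[OF refl])
    fix u assume "u \<in> L"
    have "X u * cnj (X u) = of_real ((cmod (ip (weyl u f) f))^2) * of_real ((cmod (weyl_coeff \<phi> u))^2)"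
      unfolding X_def complex_norm_square by (simp add: mult_ac)
    then show "X u * cnj (X u) = of_real ((cmod (ip (weyl u f) f))^2)"
      using weyl_coeff_joint_eigen[OF assms, of u] \<open>u \<in> L\<close> by simp
  qed
  finally have "N^2 * of_real (\<Sum>v\<in>UNIV. (cmod (ip f (weyl v \<phi>)))^4)
      = N^2 * of_real (\<Sum>u\<in>L. (cmod (ip (weyl u f) f))^2)" .
  moreover have "N^2 \<noteq> 0"
    unfolding N_def by simp
  ultimately show ?thesis
    by (metis mult_left_cancel of_real_eq_iff)
qed

lemma PfL_eq_sum_cmod_ip_weyl:
  "PfL f L = (\<Sum>u\<in>L. (cmod (ip (weyl u f) f))^2) / (real CARD(('n::finite) f2vec) * (norm2 f)^4)"
  for f :: "('n::finite) f2vec \<Rightarrow> complex"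
  unfolding PfL_def Pf_def fhat_Delta by (simp add: case_prod_beta card_fun sum_divide_distrib)

lemma PfL_le_max_weyl_translate:
  fixes f \<phi> :: "('n::finite) f2vec \<Rightarrow> complex"
  assumes "lagrangian L" and "ip \<phi> \<phi> = 1" and "joint_eigen L \<phi>"
    and "f \<noteq> (\<lambda>x. 0)" and bound: "\<And>v. cmod (ip f (weyl v \<phi>)) \<le> M"
  shows "PfL f L \<le> (M / norm2 f)^2"
proof -
  define N where "N = real CARD('n f2vec)"
  define F where "F v = cmod (ip f (weyl v \<phi>))" for v
  have "N > 0" "norm2 f > 0"
    using assms(4) norm2_nonneg[of f] norm2_eq_0_iff[of f] unfolding N_def by auto
  have "(\<Sum>u\<in>L. (cmod (ip (weyl u f) f))^2) = (\<Sum>v\<in>UNIV. (F v)^2 * (F v)^2)"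
    unfolding sum_cmod_ip_weyl_pow4[OF assms(1-3), symmetric] F_def by (simp add: power4_eq_xxxx power2_eq_square mult.assoc)
  also have "\<dots> \<le> (\<Sum>v\<in>UNIV. M^2 * (F v)^2)"
    using bound unfolding F_def by (intro sum_mono mult_right_mono power_mono) auto
  also have "\<dots> = M^2 * (N * (norm2 f)^2)"
    unfolding sum_distrib_left[symmetric] F_def N_def sum_cmod_ip_weyl_sq[OF assms(2)] ..
  finally have "(\<Sum>u\<in>L. (cmod (ip (weyl u f) f))^2) \<le> M^2 * (N * (norm2 f)^2)" .
  then have "PfL f L \<le> M^2 * (N * (norm2 f)^2) / (N * (norm2 f)^4)"
    unfolding PfL_eq_sum_cmod_ip_weyl N_def[symmetric]
    by (rule divide_right_mono) (use \<open>N > 0\<close> norm2_nonneg[of f] in simp)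
  also have "\<dots> = (M / norm2 f)^2"
    using \<open>N > 0\<close> \<open>norm2 f > 0\<close> by (simp add: field_simps power2_eq_square power4_eq_xxxx)
  finally show ?thesis .
qed

theorem lemma2p18:
  fixes f :: "('n::finite) f2vec \<Rightarrow> complex"
    and L :: "('n f2vec \<times> 'n f2vec) set"
  assumes "f \<noteq> (\<lambda>x. 0)"
    and "lagrangian L"
  shows "\<exists>\<phi>. stabilizer_state \<phi> \<and> stabLag \<phi> = L \<and>
           (\<forall>\<psi>. stabilizer_state \<psi> \<and> stabLag \<psi> = L \<longrightarrow>
              cmod (ip f \<psi>) \<le> cmod (ip f \<phi>)) \<and>
           PfL f L \<le> (cmod (ip f \<phi>) / norm2 f)^2"
proof -
  obtain \<phi>\<^sub>0 :: "'n f2vec \<Rightarrow> complex" where \<phi>\<^sub>0: "ip \<phi>\<^sub>0 \<phi>\<^sub>0 = 1" "joint_eigen L \<phi>\<^sub>0"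
    using joint_eigen_exists assms(2) unfolding lagrangian_def by blast
  define F where "F v = cmod (ip f (weyl v \<phi>\<^sub>0))" for v
  have "Max (range F) \<in> range F"
    by (rule Max_in) simp_all
  then obtain v\<^sub>m where "F v\<^sub>m = Max (range F)"
    by (metis imageE)
  then have max: "F v \<le> F v\<^sub>m" for v
    by simp
  define \<phi> where "\<phi> = weyl v\<^sub>m \<phi>\<^sub>0"
  have "stabilizer_state \<phi> \<and> stabLag \<phi> = L"
    unfolding stabilizer_state_stabLag_iff[OF assms(2)] \<phi>_def using \<phi>\<^sub>0 by (simp add: ip_weyl_weyl joint_eigen_weyl)
  moreover have "cmod (ip f \<psi>) \<le> cmod (ip f \<phi>)" if "stabilizer_state \<psi> \<and> stabLag \<psi> = L" for \<psi>
    using cmod_ip_eq_weyl_translate[OF assms(2) \<phi>\<^sub>0] that max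
    unfolding stabilizer_state_stabLag_iff[OF assms(2)] F_def \<phi>_def by metis
  moreover have "PfL f L \<le> (cmod (ip f \<phi>) / norm2 f)^2"
    using PfL_le_max_weyl_translate[OF assms(2) \<phi>\<^sub>0 assms(1)] max unfolding F_def \<phi>_def by blast
  ultimately show ?thesis
    by blast
qed

end
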